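(* Let $t$ be a positive integer, $w\ge\lceil (t+1)/2\rceil$ an integer, and $V$ a voter matrix with $t$ topics and $n$ voters such that $md_V<w$. For $l=0,\dots,t$ let $v_l$ be the number of rows of $V$ with exactly $l$ entries $Y$. Then for every $k=w,\dots,t$, $$s_{k,0}v_0+s_{k,1}v_1+\dots+s_{k,t}v_t\le s_{k,t}\left\lfloor\frac{n-1}{2}\right\rfloor.$$
   Context: A voter matrix with $t$ topics is a matrix $V\in\{Y,N\}^{n\times t}$ for some positive integer $n$ (rows are voters), subject to the standing assumption that in every column the number of entries $Y$ is at least the number of entries $N$. A proposal is a vector in $\{Y,N\}^t$; a $k$-proposal is one with exactly $k$ entries $Y$, and an $l$-voter is a vector (row) with exactly $l$ entries $Y$. A voter $v$ supports a proposal $p$ if the Hamming distance between $v$ and $p$ is at most $t/2$; $p$ is supported by $V$ if at least $n/2$ rows of $V$ support $p$. $md_V$ is the maximum number of entries $Y$ of a proposal supported by $V$. $s_{k,l}$ denotes the number of $k$-proposals supported by a given $l$-voter (independent of the choice of $l$-voter). *)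

theory Defs
  imports Main
begin

text \<open>Entries: True = Y, False = N. Topics are 0..<t, voters (rows) are 0..<n.
  A voter matrix is a function V with V i j the entry of row i, column j.
  Vectors in {Y,N}^t are functions nat => bool, only arguments < t matter.\<close>

definition num_Y :: "nat \<Rightarrow> (nat \<Rightarrow> bool) \<Rightarrow> nat" where
  "num_Y t p = card {j. j < t \<and> p j}"

definition hamming :: "nat \<Rightarrow> (nat \<Rightarrow> bool) \<Rightarrow> (nat \<Rightarrow> bool) \<Rightarrow> nat" where
  "hamming t v p = card {j. j < t \<and> v j \<noteq> p j}"

definition voter_matrix :: "nat \<Rightarrow> nat \<Rightarrow> (nat \<Rightarrow> nat \<Rightarrow> bool) \<Rightarrow> bool" where
  "voter_matrix t n V \<longleftrightarrow> 0 < n \<and>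
     (\<forall>j<t. card {i. i < n \<and> \<not> V i j} \<le> card {i. i < n \<and> V i j})"

text \<open>Proposals are normalised to be False outside 0..<t, so that the set of proposals is finite.\<close>
definition proposal :: "nat \<Rightarrow> (nat \<Rightarrow> bool) \<Rightarrow> bool" where
  "proposal t p \<longleftrightarrow> (\<forall>j\<ge>t. \<not> p j)"

definition supports :: "nat \<Rightarrow> (nat \<Rightarrow> bool) \<Rightarrow> (nat \<Rightarrow> bool) \<Rightarrow> bool" where
  "supports t v p \<longleftrightarrow> 2 * hamming t v p \<le> t"

definition supported :: "nat \<Rightarrow> nat \<Rightarrow> (nat \<Rightarrow> nat \<Rightarrow> bool) \<Rightarrow> (nat \<Rightarrow> bool) \<Rightarrow> bool" where
  "supported t n V p \<longleftrightarrow> n \<le> 2 * card {i. i < n \<and> supports t (V i) p}"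

text \<open>s_{k,l}: number of k-proposals supported by the (canonical) l-voter whose first l entries are Y.\<close>
definition s_count :: "nat \<Rightarrow> nat \<Rightarrow> nat \<Rightarrow> nat" where
  "s_count t k l = card {p. proposal t p \<and> num_Y t p = k \<and> supports t (\<lambda>j. j < l) p}"

definition v_count :: "nat \<Rightarrow> nat \<Rightarrow> (nat \<Rightarrow> nat \<Rightarrow> bool) \<Rightarrow> nat \<Rightarrow> nat" where
  "v_count t n V l = card {i. i < n \<and> num_Y t (V i) = l}"

end

theory Submission
  imports Defs
begin

text \<open>Double count the pairs (row, \<open>k\<close>-proposal) in which the row supports the proposal.
  A row with \<open>l\<close> entries Y supports \<open>s\<^sub>k\<^sub>,\<^sub>l\<close> \<open>k\<close>-proposals, since permuting the topics
  carries the canonical \<open>l\<close>-voter to it. Since \<open>k \<ge> w > md\<^sub>V\<close>, no \<open>k\<close>-proposal is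
  supported, so each one is supported by at most \<open>\<lfloor>(n - 1)/2\<rfloor>\<close> rows. Finally, the all-Y
  voter is at distance \<open>t - k \<le> t/2\<close> from every \<open>k\<close>-proposal, so there are exactly \<open>s\<^sub>k\<^sub>,\<^sub>t\<close>
  of them.\<close>

lemma finite_proposals: "finite {p. proposal t p}"
proof -
  have "{p. proposal t p} \<subseteq> (\<lambda>S j. j \<in> S) ` Pow {..<t}"
  proof
    fix p assume "p \<in> {p. proposal t p}"
    then have "p = (\<lambda>j. j \<in> {j. p j})" "{j. p j} \<in> Pow {..<t}"
      by (auto simp: proposal_def not_less[symmetric])
    then show "p \<in> (\<lambda>S j. j \<in> S) ` Pow {..<t}" by blast
  qed
  then show ?thesis by (rule finite_subset) auto
qed

lemma num_Y_le: "num_Y t p \<le> t"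
  unfolding num_Y_def by (rule card_mono[where B = "{..<t}", simplified]) auto

lemma hamming_all_Y: "hamming t (\<lambda>j. j < t) p = t - num_Y t p"
proof -
  have "{j. j < t \<and> (j < t) \<noteq> p j} = {..<t} - {j. j < t \<and> p j}" by auto
  then show ?thesis
    unfolding hamming_def num_Y_def by (simp add: card_Diff_subset subset_eq)
qed

lemma card_Collect_bij_betw:
  assumes "bij_betw \<tau> A B"
  shows "card {x \<in> A. Q (\<tau> x)} = card {y \<in> B. Q y}"
  by (rule bij_betw_same_card, rule bij_betw_Collect[OF assms]) simp

definition permute :: "nat \<Rightarrow> (nat \<Rightarrow> nat) \<Rightarrow> (nat \<Rightarrow> bool) \<Rightarrow> nat \<Rightarrow> bool" where
  "permute t \<tau> p = (\<lambda>j. j < t \<and> p (\<tau> j))"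

context
  fixes t :: nat and \<tau> :: "nat \<Rightarrow> nat"
  assumes perm: "bij_betw \<tau> {..<t} {..<t}"
begin

lemma proposal_permute: "proposal t (permute t \<tau> p)"
  by (simp add: proposal_def permute_def)

lemma num_Y_permute: "num_Y t (permute t \<tau> p) = num_Y t p"
  using card_Collect_bij_betw[OF perm, of p]
  by (simp add: num_Y_def permute_def lessThan_def)

lemma hamming_permute:
  assumes "\<forall>j<t. v j = u (\<tau> j)"
  shows "hamming t v (permute t \<tau> p) = hamming t u p"
  using assms card_Collect_bij_betw[OF perm, of "\<lambda>i. u i \<noteq> p i"]
  by (simp add: hamming_def permute_def lessThan_def cong: conj_cong)

lemma inj_on_permute: "inj_on (permute t \<tau>) {p. proposal t p}"
proof (rule inj_onI)
  fix p q
  assume p: "p \<in> {p. proposal t p}" and q: "q \<in> {p. proposal t p}"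
    and eq: "permute t \<tau> p = permute t \<tau> q"
  show "p = q"
  proof
    fix i
    show "p i = q i"
    proof (cases "i < t")
      case True
      then obtain j where "j < t" "i = \<tau> j"
        using perm by (metis bij_betw_iff_bijections lessThan_iff)
      then show ?thesis using fun_cong[OF eq, of j] by (simp add: permute_def)
    next
      case False
      then show ?thesis using p q by (simp add: proposal_def)
    qed
  qed
qed

end

lemma ex_perm_sorting_Y_first:
  "\<exists>\<tau>. bij_betw \<tau> {..<t} {..<t} \<and> (\<forall>j<t. v j \<longleftrightarrow> \<tau> j < num_Y t v)"
proof -
  define l where "l = num_Y t v"
  define A where "A = {j. j < t \<and> v j}"
  define B where "B = {j. j < t \<and> \<not> v j}"
  have A_B: "A \<union> B = {..<t}" "A \<inter> B = {}" unfolding A_def B_def by auto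
  have "finite A" "finite B" unfolding A_def B_def by simp_all
  have "card A = l" unfolding A_def l_def num_Y_def by simp
  moreover have "card A + card B = t"
    using card_Un_disjoint[OF \<open>finite A\<close> \<open>finite B\<close>] A_B by simp
  ultimately have "card A = card {..<l}" "card B = card {l..<t}" by simp_all
  then obtain f g where f: "bij_betw f A {..<l}" and g: "bij_betw g B {l..<t}"
    using bij_betw_iff_card \<open>finite A\<close> \<open>finite B\<close> by (metis finite_atLeastLessThan finite_lessThan)
  define \<tau> where "\<tau> j = (if v j then f j else g j)" for j
  have "bij_betw \<tau> A {..<l}"
    using f by (rule bij_betw_cong[THEN iffD1, rotated]) (simp add: \<tau>_def A_def)
  moreover have "bij_betw \<tau> B {l..<t}"
    using g by (rule bij_betw_cong[THEN iffD1, rotated]) (simp add: \<tau>_def B_def)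
  ultimately have "bij_betw \<tau> (A \<union> B) ({..<l} \<union> {l..<t})"
    by (rule bij_betw_combine) auto
  moreover have "{..<l} \<union> {l..<t} = {..<t}"
    using num_Y_le[of t v] by (auto simp: l_def)
  moreover have "v j \<longleftrightarrow> \<tau> j < l" if "j < t" for j
    using that bij_betw_apply[OF f, of j] bij_betw_apply[OF g, of j]
    by (auto simp: \<tau>_def A_def B_def)
  ultimately show ?thesis using A_B(1) l_def by auto
qed

lemma s_count_le_card_supported:
  "s_count t k (num_Y t v) \<le> card {p. proposal t p \<and> num_Y t p = k \<and> supports t v p}"
proof -
  obtain \<tau> where perm: "bij_betw \<tau> {..<t} {..<t}" and sorted_Y: "\<forall>j<t. v j \<longleftrightarrow> \<tau> j < num_Y t v"
    using ex_perm_sorting_Y_first by blast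
  let ?S = "{p. proposal t p \<and> num_Y t p = k \<and> supports t (\<lambda>j. j < num_Y t v) p}"
  let ?T = "{p. proposal t p \<and> num_Y t p = k \<and> supports t v p}"
  have "inj_on (permute t \<tau>) ?S"
    using inj_on_permute[OF perm] by (rule inj_on_subset) blast
  moreover have "permute t \<tau> ` ?S \<subseteq> ?T"
    using proposal_permute[OF perm] num_Y_permute[OF perm] hamming_permute[OF perm sorted_Y]
    by (auto simp: supports_def)
  moreover have "finite ?T"
    using finite_proposals by (rule finite_subset[rotated]) blast
  ultimately show ?thesis
    unfolding s_count_def by (rule card_inj_on_le)
qed

lemma s_count_all_Y:
  assumes "t \<le> 2 * k"
  shows "s_count t k t = card {p. proposal t p \<and> num_Y t p = k}"
proof -
  have "supports t (\<lambda>j. j < t) p" if "num_Y t p = k" for p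
    using assms that by (simp add: supports_def hamming_all_Y)
  then show ?thesis unfolding s_count_def by meson
qed

lemma sum_s_count_v_count:
  "(\<Sum>l\<le>t. s_count t k l * v_count t n V l) = (\<Sum>i<n. s_count t k (num_Y t (V i)))"
proof -
  have "(\<lambda>i. num_Y t (V i)) ` {..<n} \<subseteq> {..t}"
    using num_Y_le by auto
  from sum.group[OF _ _ this, of "\<lambda>i. s_count t k (num_Y t (V i))"]
  show ?thesis by (simp add: v_count_def mult.commute)
qed

theorem lemma4p5:
  fixes t n w k :: nat and V :: "nat \<Rightarrow> nat \<Rightarrow> bool"
  assumes "0 < t"
    and "(t + 2) div 2 \<le> w"
    and "voter_matrix t n V"
    and md: "\<forall>p. proposal t p \<and> supported t n V p \<longrightarrow> num_Y t p < w"
    and "w \<le> k" and "k \<le> t"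
  shows "(\<Sum>l\<le>t. s_count t k l * v_count t n V l) \<le> s_count t k t * ((n - 1) div 2)"
proof -
  define P where "P = {p. proposal t p \<and> num_Y t p = k}"
  have "finite P"
    using finite_proposals[of t] by (rule finite_subset[rotated]) (auto simp: P_def)
  have few_supporters: "card {i \<in> {..<n}. supports t (V i) p} \<le> (n - 1) div 2" if "p \<in> P" for p
    using md that \<open>w \<le> k\<close> unfolding P_def supported_def by fastforce
  have "(\<Sum>l\<le>t. s_count t k l * v_count t n V l) = (\<Sum>i<n. s_count t k (num_Y t (V i)))"
    by (rule sum_s_count_v_count)
  also have "\<dots> \<le> (\<Sum>i<n. card {p \<in> P. supports t (V i) p})"
    using s_count_le_card_supported by (intro sum_mono) (simp add: P_def conj_assoc)
  also have "\<dots> = (\<Sum>p\<in>P. card {i \<in> {..<n}. supports t (V i) p})"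
    using \<open>finite P\<close> by (intro sum_multicount_gen) auto
  also have "\<dots> \<le> card P * ((n - 1) div 2)"
    using sum_mono[OF few_supporters] by simp
  also have "card P = s_count t k t"
    using s_count_all_Y assms(2,5) unfolding P_def by simp
  finally show ?thesis .
qed

end
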